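(* Let $A$ be an $n \times n$ matrix with integer coefficients, and let $\lambda$ be a simple eigenvalue of $A$. Then \[ \kappa_{NSE}(A,\lambda) \le n^{3n}\, 2^{2n} \left(2\sqrt{n}\, H(A)\right)^{2n^3 - 2n}, \] where $H(A) = \max_{i,j}|A_{ij}|$.
   Context: Let $x, y \in \mathbb{C}^n$ be right and left eigenvectors of $A$ for $\lambda$ with $\|x\| = \|y\| = 1$ (Euclidean norm): $Ax = \lambda x$, $y^* A = \lambda y^*$, where $y^*$ is the conjugate transpose. The condition number of the eigenvalue $\lambda$ is $\kappa_{NSE}(A,\lambda) = \sec(\widehat{x,y}) = 1/|y^* x|$. *)

theory Defs
  imports "Jordan_Normal_Form.Jordan_Normal_Form_Existence"
begin

definition vnorm :: "complex vec \<Rightarrow> real" where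
  "vnorm x = sqrt (\<Sum>i<dim_vec x. (cmod (x $ i))^2)"

definition cinner :: "complex vec \<Rightarrow> complex vec \<Rightarrow> complex" where
  "cinner y x = (\<Sum>i<dim_vec x. cnj (y $ i) * x $ i)"

definition simple_eigenvalue :: "complex mat \<Rightarrow> complex \<Rightarrow> bool" where
  "simple_eigenvalue B l \<longleftrightarrow> order l (char_poly B) = 1"

text \<open>Condition number kappa_NSE, given unit right/left eigenvectors x, y.\<close>
definition kappa_NSE :: "complex vec \<Rightarrow> complex vec \<Rightarrow> real" where
  "kappa_NSE x y = 1 / cmod (cinner y x)"

definition height :: "int mat \<Rightarrow> int" where
  "height A = Max {\<bar>A $$ (i, j)\<bar> | i j. i < dim_row A \<and> j < dim_col A}"

end

theory Submission
  imports Defs "Jordan_Normal_Form.Jordan_Normal_Form_Uniqueness"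
begin

(* Let p be the characteristic polynomial of A, H = H(A), and M the adjugate of A - l I.
   Since l is a simple root of p, the kernels of A - l I and of its transpose are the lines
   spanned by x and conj y; as (A - l I) M = M (A - l I) = 0, this forces M = c x y^*.
   Comparing traces gives p'(l) = +-c y^* x, so kappa = |c| / |p'(l)|.

   Numerator: a unit vector has a component of modulus at least 1/sqrt n, so |c| is at most
   n times an entry of M, i.e. a cofactor of A - l I, which is at most (n-1)! (|l| + H)^(n-1).

   Denominator: p'(l) is a nonzero eigenvalue of the integer matrix p'(A). The product of the
   nonzero eigenvalues of an integer matrix is, up to sign, a nonzero integer coefficient of
   its characteristic polynomial, so |p'(l)| R^(n-1) >= 1 for any bound R >= 1 on the moduli
   of the eigenvalues of p'(A); such an R follows from bounds on the entries of p'(A).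

   All bounds are powers of (n+1) H; comparing exponents gives the claim for n >= 3, a numerical
   check settles n = 2, and for n = 1 the condition number is 1. *)

section \<open>The adjugate of the characteristic matrix at a simple eigenvalue\<close>

lemma kernel_dim_char_matrix_le_order:
  fixes C :: "complex mat"
  assumes C: "C \<in> carrier_mat n n"
  shows "kernel_dim (char_matrix C l) \<le> Polynomial.order l (char_poly C)"
proof -
  obtain as where "char_poly C = (\<Prod>a\<leftarrow>as. [:- a, 1:])"
    using char_poly_factorized[OF C] by blast
  then obtain n_as where jnf: "jordan_nf C n_as" using jordan_nf_exists[OF C] by blast
  have "kernel_dim (char_matrix C l) = dim_gen_eigenspace C l 1"
    using C by (simp add: dim_gen_eigenspace_def)
  also have "\<dots> = (\<Sum>k\<leftarrow>map fst [(k, e)\<leftarrow>n_as. e = l]. min 1 k)"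
    by (rule dim_gen_eigenspace[OF jnf])
  also have "\<dots> \<le> (\<Sum>k\<leftarrow>map fst [(k, e)\<leftarrow>n_as. e = l]. k)"
    by (rule sum_list_mono) simp
  also have "\<dots> = Polynomial.order l (char_poly C)"
    unfolding jordan_nf_order[OF jnf] by (simp add: case_prod_beta' cond_case_prod_eta)
  finally show ?thesis .
qed

lemma mat_kernel_collinear:
  fixes B :: "'a :: field mat"
  assumes B: "B \<in> carrier_mat n n" and dim: "kernel_dim B \<le> 1"
    and x: "x \<in> mat_kernel B" "x \<noteq> 0\<^sub>v n" and z: "z \<in> mat_kernel B"
  shows "\<exists>a. z = a \<cdot>\<^sub>v x"
proof (rule ccontr)
  assume not_collinear: "\<nexists>a. z = a \<cdot>\<^sub>v x"
  interpret K: kernel n n B by unfold_locales (rule B)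
  have xc: "x \<in> carrier_vec n" and zc: "z \<in> carrier_vec n"
    using x(1) z mat_kernel_carrier B by auto
  have xz: "x \<noteq> z" using not_collinear by (metis one_smult_vec)
  have "K.NC.lin_indpt {x, z}"
  proof (rule K.NC.finite_lin_indpt2)
    fix a assume lc: "K.NC.lincomb a {x, z} = 0\<^sub>v n"
    have comp: "a x * x $ i + a z * z $ i = 0" if i: "i < n" for i
      using K.NC.lincomb_index[OF i, of "{x, z}" a] lc xz xc zc i by simp
    have "a z = 0"
    proof (rule ccontr)
      assume "a z \<noteq> 0"
      hence "z = (- a x / a z) \<cdot>\<^sub>v x"
        using comp xc zc by (intro eq_vecI) (auto simp: field_simps add_eq_0_iff2)
      with not_collinear show False by blast
    qed
    moreover have "a x = 0"
    proof (rule ccontr)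
      assume "a x \<noteq> 0"
      hence "x = 0\<^sub>v n" using comp \<open>a z = 0\<close> xc by (intro eq_vecI) auto
      with x(2) show False ..
    qed
    ultimately show "\<forall>v\<in>{x, z}. a v = 0" by simp
  qed (use xc zc in auto)
  hence "K.lin_indpt {x, z}" using K.lindep_same[of "{x, z}"] x(1) z by auto
  moreover obtain Bs where "finite Bs" "K.basis Bs" using kernel_basis_exists[OF B] by blast
  hence "K.Ker.fin_dim" unfolding K.Ker.fin_dim_def K.Ker.basis_def by blast
  ultimately have "card {x, z} \<le> kernel_dim B"
    using K.Ker.li_le_dim(2) x(1) z by auto
  with xz dim show False by simp
qed

lemma det_char_matrix:
  fixes D :: "'a :: field mat"
  assumes D: "D \<in> carrier_mat m m"
  shows "det (char_matrix D l) = (-1) ^ m * poly (char_poly D) l"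
proof -
  have "- char_matrix D l = (-1) \<cdot>\<^sub>m char_matrix D l"
    using D by (intro eq_matI) auto
  hence "poly (char_poly D) l = (-1) ^ m * det (char_matrix D l)"
    using carrier_matD[OF char_matrix_closed[OF D]] by (simp add: char_poly_matrix[OF D])
  thus ?thesis by (simp add: mult.assoc[symmetric] flip: power_mult_distrib)
qed

lemma mat_delete_char_matrix:
  assumes "C \<in> carrier_mat n n" "i < n"
  shows "mat_delete (char_matrix C l) i i = char_matrix (mat_delete C i i) l"
  using assms by (intro eq_matI) (auto simp: mat_delete_def char_matrix_def)

lemma transpose_char_matrix:
  assumes "C \<in> carrier_mat n n"
  shows "transpose_mat (char_matrix C l) = char_matrix (transpose_mat C) l"
  using assms by (intro eq_matI) (auto simp: char_matrix_def)

lemma trace_adj_char_matrix: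
  fixes C :: "'a :: field mat"
  assumes C: "C \<in> carrier_mat n n"
  shows "(\<Sum>i<n. adj_mat (char_matrix C l) $$ (i, i))
    = (-1) ^ (n - 1) * poly (pderiv (char_poly C)) l"
proof -
  have "adj_mat (char_matrix C l) $$ (i, i) = (-1) ^ (n - 1) * poly (char_poly (mat_delete C i i)) l"
    if i: "i < n" for i
  proof -
    have "(-1 :: 'a) ^ (i + i) = 1" by (simp flip: mult_2 add: power_mult)
    thus ?thesis
      using C i carrier_matD[OF char_matrix_closed[OF C]] by (simp add: adj_mat_def cofactor_def
          mat_delete_char_matrix det_char_matrix[OF mat_delete_carrier[OF C]])
  qed
  thus ?thesis
    by (simp add: pderiv_char_poly[OF C] poly_sum sum_distrib_left)
qed

lemma adj_mat_col_in_mat_kernel: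
  fixes B :: "'a :: comm_ring_1 mat"
  assumes B: "B \<in> carrier_mat n n" and det: "det B = 0" and j: "j < n"
  shows "col (adj_mat B) j \<in> mat_kernel B"
proof (rule mat_kernelI[OF B])
  have "B *\<^sub>v col (adj_mat B) j = col (B * adj_mat B) j"
    using col_mult2[OF B adj_mat(1)[OF B] j] by simp
  also have "\<dots> = 0\<^sub>v n"
    using j by (auto simp: adj_mat(2)[OF B] det)
  finally show "B *\<^sub>v col (adj_mat B) j = 0\<^sub>v n" .
qed (use B j adj_mat(1)[OF B] in auto)

lemma adj_mat_row_in_mat_kernel:
  fixes B :: "'a :: comm_ring_1 mat"
  assumes B: "B \<in> carrier_mat n n" and det: "det B = 0" and i: "i < n"
  shows "row (adj_mat B) i \<in> mat_kernel (transpose_mat B)"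
proof (rule mat_kernelI)
  have M: "adj_mat B \<in> carrier_mat n n" by (rule adj_mat(1)[OF B])
  have "transpose_mat B *\<^sub>v row (adj_mat B) i = transpose_mat B *\<^sub>v col (transpose_mat (adj_mat B)) i"
    using M i by simp
  also have "\<dots> = col (transpose_mat B * transpose_mat (adj_mat B)) i"
    using B M i by (intro col_mult2[symmetric]) auto
  also have "\<dots> = col (transpose_mat (adj_mat B * B)) i"
    by (simp only: transpose_mult[OF M B])
  also have "\<dots> = 0\<^sub>v n"
    using i by (auto simp: adj_mat(3)[OF B] det)
  finally show "transpose_mat B *\<^sub>v row (adj_mat B) i = 0\<^sub>v n" .
qed (use B i adj_mat(1)[OF B] in auto)

lemma mat_rank_one_of_cols_rows:
  fixes M :: "'a :: field mat"
  assumes M: "M \<in> carrier_mat n n" and x: "x \<in> carrier_vec n" "x \<noteq> 0\<^sub>v n"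
    and w: "w \<in> carrier_vec n"
    and cols: "\<And>j. j < n \<Longrightarrow> \<exists>a. col M j = a \<cdot>\<^sub>v x"
    and rows: "\<And>i. i < n \<Longrightarrow> \<exists>b. row M i = b \<cdot>\<^sub>v w"
  shows "\<exists>c. \<forall>i<n. \<forall>j<n. M $$ (i, j) = c * x $ i * w $ j"
proof -
  obtain i0 where i0: "i0 < n" "x $ i0 \<noteq> 0"
    using x by (metis carrier_vecD eq_vecI index_zero_vec)
  obtain b where b: "row M i0 = b \<cdot>\<^sub>v w" using rows[OF i0(1)] by blast
  have "M $$ (i, j) = b / x $ i0 * x $ i * w $ j" if ij: "i < n" "j < n" for i j
  proof -
    obtain a where a: "col M j = a \<cdot>\<^sub>v x" using cols[OF ij(2)] by blast
    have "M $$ (i, j) = a * x $ i" "M $$ (i0, j) = a * x $ i0"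
      using arg_cong[OF a, of "\<lambda>v. v $ i"] arg_cong[OF a, of "\<lambda>v. v $ i0"] M x ij i0
      by auto
    moreover have "M $$ (i0, j) = b * w $ j"
      using arg_cong[OF b, of "\<lambda>v. v $ j"] M w ij i0 by auto
    ultimately show ?thesis using i0(2) by (simp add: field_simps)
  qed
  thus ?thesis by blast
qed

lemma adj_char_matrix_simple_eigenvalue:
  fixes C :: "complex mat"
  assumes C: "C \<in> carrier_mat n n" and simple: "Polynomial.order l (char_poly C) = 1"
    and x: "eigenvector C x l" and w: "eigenvector (transpose_mat C) w l"
  shows "\<exists>c. \<forall>i<n. \<forall>j<n. adj_mat (char_matrix C l) $$ (i, j) = c * x $ i * w $ j"
proof -
  define B where "B = char_matrix C l"
  have B: "B \<in> carrier_mat n n" and Bt: "transpose_mat B \<in> carrier_mat n n"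
    using C by (auto simp: B_def)
  have Ct: "transpose_mat C \<in> carrier_mat n n" using C by simp
  have x': "x \<in> carrier_vec n" "x \<noteq> 0\<^sub>v n" "x \<in> mat_kernel B"
    using x B unfolding B_def eigenvector_char_matrix[OF C] by (auto intro: mat_kernelI)
  have w': "w \<in> mat_kernel (transpose_mat B)"
    using w Bt unfolding B_def transpose_char_matrix[OF C] eigenvector_char_matrix[OF Ct]
    by (auto intro: mat_kernelI)
  have "eigenvalue C l" using x unfolding eigenvalue_def by blast
  hence "det B = 0"
    unfolding B_def det_char_matrix[OF C] eigenvalue_root_char_poly[OF C] by simp
  have "kernel_dim B \<le> 1" "kernel_dim (transpose_mat B) \<le> 1"
    using kernel_dim_char_matrix_le_order[OF C, of l] kernel_dim_char_matrix_le_order[OF Ct, of l]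
    unfolding B_def transpose_char_matrix[OF C] char_poly_transpose_mat[OF C] simple by auto
  show ?thesis
    unfolding B_def[symmetric]
  proof (rule mat_rank_one_of_cols_rows[OF adj_mat(1)[OF B] x'(1,2)])
    show "w \<in> carrier_vec n" using w Ct by (simp add: eigenvector_def)
    show "\<exists>a. col (adj_mat B) j = a \<cdot>\<^sub>v x" if "j < n" for j
      by (rule mat_kernel_collinear[OF B \<open>kernel_dim B \<le> 1\<close> x'(3,2)
            adj_mat_col_in_mat_kernel[OF B \<open>det B = 0\<close> that]])
    show "\<exists>b. row (adj_mat B) i = b \<cdot>\<^sub>v w" if "i < n" for i
      using w by (intro mat_kernel_collinear[OF Bt \<open>kernel_dim (transpose_mat B) \<le> 1\<close> w'
            _ adj_mat_row_in_mat_kernel[OF B \<open>det B = 0\<close> that]])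
        (use C in \<open>auto simp: eigenvector_def\<close>)
  qed
qed

section \<open>The condition number through the adjugate\<close>

lemma vnorm_eq_1_large_component:
  assumes v: "v \<in> carrier_vec n" and norm: "vnorm v = 1"
  obtains i where "i < n" "1 \<le> real n * (cmod (v $ i))\<^sup>2"
proof -
  have sum: "(\<Sum>i<n. (cmod (v $ i))\<^sup>2) = 1"
    using v norm by (simp add: vnorm_def)
  hence "n \<noteq> 0" by (intro notI) simp
  have "\<exists>i<n. 1 \<le> real n * (cmod (v $ i))\<^sup>2"
  proof (rule ccontr)
    assume "\<not> ?thesis"
    hence "(\<Sum>i<n. real n * (cmod (v $ i))\<^sup>2) < (\<Sum>i<n. 1)"
      using \<open>n \<noteq> 0\<close> by (intro sum_strict_mono) auto
    with sum show False by (simp flip: sum_distrib_left)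
  qed
  with that show thesis by blast
qed

lemma kappa_NSE_mult_pderiv_le:
  fixes C :: "complex mat"
  assumes C: "C \<in> carrier_mat n n" and simple: "Polynomial.order l (char_poly C) = 1"
    and x: "x \<in> carrier_vec n" "vnorm x = 1" "C *\<^sub>v x = l \<cdot>\<^sub>v x"
    and y: "y \<in> carrier_vec n" "vnorm y = 1"
      "transpose_mat C *\<^sub>v conjugate y = l \<cdot>\<^sub>v conjugate y"
    and K: "\<And>i j. i < n \<Longrightarrow> j < n \<Longrightarrow> cmod (adj_mat (char_matrix C l) $$ (i, j)) \<le> K"
  shows "kappa_NSE x y * cmod (poly (pderiv (char_poly C)) l) \<le> real n * K"
proof -
  obtain i0 where i0: "i0 < n" "1 \<le> real n * (cmod (x $ i0))\<^sup>2"
    using vnorm_eq_1_large_component[OF x(1,2)] .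
  obtain j0 where j0: "j0 < n" "1 \<le> real n * (cmod (y $ j0))\<^sup>2"
    using vnorm_eq_1_large_component[OF y(1,2)] .
  have "eigenvector C x l" "eigenvector (transpose_mat C) (conjugate y) l"
    using x y i0 j0 C unfolding eigenvector_def by (auto dest!: arg_cong[of _ _ "\<lambda>v. v $ _"])
  then obtain c where c: "\<forall>i<n. \<forall>j<n. adj_mat (char_matrix C l) $$ (i, j) = c * x $ i * cnj (y $ j)"
    using adj_char_matrix_simple_eigenvalue[OF C simple] y(1) by fastforce
  have "(-1) ^ (n - 1) * poly (pderiv (char_poly C)) l = c * cinner y x"
    unfolding trace_adj_char_matrix[OF C, symmetric] cinner_def sum_distrib_left
    using c x(1) by (auto intro!: sum.cong)
  hence pderiv_eq: "cmod (poly (pderiv (char_poly C)) l) = cmod c * cmod (cinner y x)"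
    by (metis norm_mult norm_minus_cancel norm_one norm_power power_one mult_1)
  \<comment> \<open>if \<open>cinner y x = 0\<close>, then \<open>kappa_NSE x y = 0\<close> by the convention \<open>1 / 0 = 0\<close>\<close>
  have "kappa_NSE x y * cmod (poly (pderiv (char_poly C)) l) \<le> cmod c"
    unfolding kappa_NSE_def pderiv_eq by (cases "cinner y x = 0") auto
  also have "\<dots> \<le> real n * K"
  proof -
    have "(real n * cmod (x $ i0) * cmod (y $ j0))\<^sup>2
        = (real n * (cmod (x $ i0))\<^sup>2) * (real n * (cmod (y $ j0))\<^sup>2)"
      by (simp add: power_mult_distrib power2_eq_square)
    hence "1 \<le> (real n * cmod (x $ i0) * cmod (y $ j0))\<^sup>2"
      using mult_mono[OF i0(2) j0(2)] by simp
    hence large: "1 \<le> real n * cmod (x $ i0) * cmod (y $ j0)"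
      using power2_le_imp_le[of 1 "real n * cmod (x $ i0) * cmod (y $ j0)"] by simp
    have "cmod c \<le> real n * (cmod c * cmod (x $ i0) * cmod (y $ j0))"
      using mult_left_mono[OF large norm_ge_zero[of c]] by (simp add: mult_ac)
    also have "\<dots> = real n * cmod (adj_mat (char_matrix C l) $$ (i0, j0))"
      using c i0 j0 by (simp add: norm_mult)
    also have "\<dots> \<le> real n * K"
      using K[OF i0(1) j0(1)] by (simp add: mult_left_mono)
    finally show ?thesis .
  qed
  finally show ?thesis .
qed

lemma kappa_NSE_dim_1:
  assumes "x \<in> carrier_vec 1" "y \<in> carrier_vec 1" "vnorm x = 1" "vnorm y = 1"
  shows "kappa_NSE x y = 1"
  using assms by (simp add: kappa_NSE_def cinner_def vnorm_def norm_mult)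

section \<open>Bounds on entries, coefficients and eigenvalues\<close>

lemma norm_det_le:
  fixes B :: "'a :: real_normed_field mat"
  assumes B: "B \<in> carrier_mat m m"
    and r: "\<And>i j. i < m \<Longrightarrow> j < m \<Longrightarrow> norm (B $$ (i, j)) \<le> r"
  shows "norm (det B) \<le> fact m * r ^ m"
proof -
  have "norm (det B) \<le> (\<Sum>p | p permutes {0..<m}. norm (signof p * (\<Prod>i = 0..<m. B $$ (i, p i))))"
    unfolding det_def'[OF B] by (rule norm_sum)
  also have "\<dots> \<le> (\<Sum>p | p permutes {0..<m}. r ^ m)"
  proof (rule sum_mono)
    fix p assume "p \<in> {p. p permutes {0..<m}}"
    hence "(\<Prod>i = 0..<m. norm (B $$ (i, p i))) \<le> (\<Prod>i = 0..<m. r)"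
      by (intro prod_mono) (auto simp: permutes_in_image intro: r)
    thus "norm (signof p * (\<Prod>i = 0..<m. B $$ (i, p i))) \<le> r ^ m"
      by (simp add: norm_mult prod_norm[symmetric] sign_def)
  qed
  also have "\<dots> = fact m * r ^ m" by (simp add: card_permutations)
  finally show ?thesis .
qed

lemma norm_adj_char_matrix_le:
  fixes C :: "'a :: real_normed_field mat"
  assumes C: "C \<in> carrier_mat n n"
    and h: "\<And>i j. i < n \<Longrightarrow> j < n \<Longrightarrow> norm (C $$ (i, j)) \<le> h"
    and ij: "i < n" "j < n"
  shows "norm (adj_mat (char_matrix C l) $$ (i, j)) \<le> fact (n - 1) * (norm l + h) ^ (n - 1)"
proof -
  define B where "B = char_matrix C l"
  have B: "B \<in> carrier_mat n n" using C by (simp add: B_def)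
  have entries: "norm (B $$ (a, b)) \<le> norm l + h" if "a < n" "b < n" for a b
    using that C norm_triangle_ineq4[of "C $$ (a, b)" l] h[OF that]
    by (auto simp: B_def char_matrix_def intro: add_increasing)
  have "norm (adj_mat B $$ (i, j)) = norm (det (mat_delete B j i))"
    using B ij by (simp add: adj_mat_def cofactor_def norm_mult norm_power)
  also have "\<dots> \<le> fact (n - 1) * (norm l + h) ^ (n - 1)"
    using B ij by (intro norm_det_le[OF mat_delete_carrier[OF B]])
      (auto simp: mat_delete_def intro!: entries)
  finally show ?thesis unfolding B_def .
qed

lemma norm_eigenvalue_le:
  fixes C :: "'a :: real_normed_field mat"
  assumes C: "C \<in> carrier_mat n n"
    and h: "\<And>i j. i < n \<Longrightarrow> j < n \<Longrightarrow> norm (C $$ (i, j)) \<le> h"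
    and ev: "eigenvector C v \<mu>"
  shows "norm \<mu> \<le> real n * h"
proof -
  have v: "v \<in> carrier_vec n" "v \<noteq> 0\<^sub>v n" "C *\<^sub>v v = \<mu> \<cdot>\<^sub>v v"
    using ev C by (auto simp: eigenvector_def)
  obtain j0 where j0: "j0 < n" "v $ j0 \<noteq> 0"
    using v by (metis carrier_vecD eq_vecI index_zero_vec)
  define m where "m = Max ((\<lambda>j. norm (v $ j)) ` {..<n})"
  have "m \<in> (\<lambda>j. norm (v $ j)) ` {..<n}" using j0 unfolding m_def by (intro Max_in) auto
  then obtain i where i: "i < n" "norm (v $ i) = m" by auto
  have max: "norm (v $ j) \<le> norm (v $ i)" if "j < n" for j
    using that unfolding i(2) m_def by (intro Max_ge) auto
  have "v $ i \<noteq> 0" using max[OF j0(1)] j0(2) by auto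
  have "norm \<mu> * norm (v $ i) = norm (\<Sum>j<n. C $$ (i, j) * v $ j)"
    using arg_cong[OF v(3), of "\<lambda>w. w $ i"] C v(1) i(1)
    by (simp add: norm_mult scalar_prod_def atLeast0LessThan)
  also have "\<dots> \<le> (\<Sum>j<n. h * norm (v $ i))"
    by (intro order_trans[OF norm_sum] sum_mono)
      (auto simp: norm_mult intro!: mult_mono h i(1) max order_trans[OF norm_ge_zero h[OF i(1) i(1)]])
  finally have "norm \<mu> * norm (v $ i) \<le> (real n * h) * norm (v $ i)" by simp
  thus ?thesis using \<open>v $ i \<noteq> 0\<close> by simp
qed

lemma norm_mat_pow_le:
  fixes C :: "'a :: real_normed_field mat"
  assumes C: "C \<in> carrier_mat n n" and "0 \<le> h"
    and h: "\<And>i j. i < n \<Longrightarrow> j < n \<Longrightarrow> norm (C $$ (i, j)) \<le> h"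
  shows "i < n \<Longrightarrow> j < n \<Longrightarrow> norm ((C ^\<^sub>m k) $$ (i, j)) \<le> (real n * h) ^ k"
proof (induction k arbitrary: i j)
  case 0
  thus ?case using C by (simp add: one_mat_def)
next
  case (Suc k)
  have "norm ((C ^\<^sub>m Suc k) $$ (i, j)) = norm (\<Sum>m<n. (C ^\<^sub>m k) $$ (i, m) * C $$ (m, j))"
    using Suc.prems C by (simp add: scalar_prod_def atLeast0LessThan)
  also have "\<dots> \<le> (\<Sum>m<n. (real n * h) ^ k * h)"
    by (intro order_trans[OF norm_sum] sum_mono)
      (use \<open>0 \<le> h\<close> in \<open>auto simp: norm_mult intro!: mult_mono Suc h\<close>)
  finally show ?case by (simp add: ac_simps)
qed

lemma norm_coeff_prod_linear_le:
  fixes as :: "'a :: real_normed_field list"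
  assumes "\<And>a. a \<in> set as \<Longrightarrow> norm a \<le> R"
  shows "norm (coeff (\<Prod>a\<leftarrow>as. [:- a, 1:]) k) \<le> (1 + R) ^ length as"
  using assms
proof (induction as arbitrary: k)
  case Nil
  thus ?case by (cases k) auto
next
  case (Cons a as)
  let ?q = "\<Prod>a\<leftarrow>as. [:- a, 1:]"
  have R: "norm a \<le> R" using Cons.prems by simp
  hence "0 \<le> R" using norm_ge_zero order_trans by blast
  have "coeff ([:- a, 1:] * ?q) k = - a * coeff ?q k + (case k of 0 \<Rightarrow> 0 | Suc k' \<Rightarrow> coeff ?q k')"
    by (cases k) (simp_all add: mult_pCons_left)
  hence "norm (coeff ([:- a, 1:] * ?q) k)
      \<le> norm a * norm (coeff ?q k) + norm (case k of 0 \<Rightarrow> 0 | Suc k' \<Rightarrow> coeff ?q k')"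
    by (simp only:) (rule order_trans[OF norm_triangle_ineq], simp add: norm_mult)
  also have "\<dots> \<le> R * (1 + R) ^ length as + (1 + R) ^ length as"
    using Cons R \<open>0 \<le> R\<close> by (intro add_mono mult_mono) (auto split: nat.splits)
  finally show ?case by (simp add: algebra_simps)
qed

lemma eigenvalue_iff_mem_char_poly_factorization:
  fixes C :: "'a :: field mat"
  assumes C: "C \<in> carrier_mat n n" and f: "char_poly C = (\<Prod>a\<leftarrow>as. [:- a, 1:])"
  shows "eigenvalue C \<mu> \<longleftrightarrow> \<mu> \<in> set as"
  unfolding eigenvalue_root_char_poly[OF C] f poly_prod_list_zero_iff by auto

lemma norm_coeff_char_poly_le:
  fixes C :: "complex mat"
  assumes C: "C \<in> carrier_mat n n"
    and h: "\<And>i j. i < n \<Longrightarrow> j < n \<Longrightarrow> cmod (C $$ (i, j)) \<le> h"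
  shows "cmod (coeff (char_poly C) k) \<le> (1 + real n * h) ^ n"
proof -
  obtain as where f: "char_poly C = (\<Prod>a\<leftarrow>as. [:- a, 1:])" and len: "length as = n"
    using char_poly_factorized[OF C] by blast
  have "cmod a \<le> real n * h" if "a \<in> set as" for a
    using that norm_eigenvalue_le[OF C h]
    unfolding eigenvalue_iff_mem_char_poly_factorization[OF C f, symmetric] eigenvalue_def
    by blast
  from norm_coeff_prod_linear_le[of as, OF this] show ?thesis unfolding f len .
qed

section \<open>Nonzero eigenvalues of integer matrices\<close>

lemma prod_linear_split_zeros:
  "(\<Prod>a\<leftarrow>as. [:- a, 1:])
    = monom (1 :: 'a :: comm_ring_1) (length (filter (\<lambda>a. a = 0) as))
      * (\<Prod>a\<leftarrow>filter (\<lambda>a. a \<noteq> 0) as. [:- a, 1:])"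
proof (induction as)
  case (Cons a as)
  show ?case
  proof (cases "a = 0")
    case True
    have "[:0, 1 :: 'a:] * monom 1 k = monom 1 (Suc k)" for k
      by (simp add: monom_Suc)
    thus ?thesis using True Cons by (simp flip: mult.assoc)
  next
    case False
    have "(\<Prod>a\<leftarrow>a # as. [:- a, 1:]) = [:- a, 1:] * (\<Prod>a\<leftarrow>as. [:- a, 1:])" by simp
    also have "\<dots> = monom 1 (length (filter (\<lambda>a. a = 0) as))
        * ([:- a, 1:] * (\<Prod>a\<leftarrow>filter (\<lambda>a. a \<noteq> 0) as. [:- a, 1:]))"
      unfolding Cons.IH by (rule mult.left_commute)
    finally show ?thesis using False by simp
  qed
qed simp

lemma norm_prod_list:
  fixes f :: "'a \<Rightarrow> 'b :: real_normed_div_algebra"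
  shows "norm (\<Prod>x\<leftarrow>xs. f x) = (\<Prod>x\<leftarrow>xs. norm (f x))"
  by (induction xs) (simp_all add: norm_mult)

lemma prod_list_le_power:
  fixes f :: "'a \<Rightarrow> 'b :: linordered_semidom"
  assumes "\<And>x. x \<in> set xs \<Longrightarrow> 0 \<le> f x \<and> f x \<le> R"
  shows "(\<Prod>x\<leftarrow>xs. f x) \<le> R ^ length xs"
  using assms
proof (induction xs)
  case (Cons a xs)
  thus ?case by (auto intro!: mult_mono prod_list_nonneg order_trans[of 0 "f a" R])
qed simp

lemma norm_nonzero_root_int_poly_ge:
  fixes f :: "int poly" and as :: "complex list"
  assumes f: "of_int_poly f = (\<Prod>a\<leftarrow>as. [:- a, 1:])"
    and R: "1 \<le> R" "\<And>a. a \<in> set as \<Longrightarrow> cmod a \<le> R"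
    and \<nu>: "\<nu> \<in> set as" "\<nu> \<noteq> 0"
  shows "1 \<le> cmod \<nu> * R ^ (length as - 1)"
proof -
  define bs where "bs = filter (\<lambda>a. a \<noteq> 0) as"
  have \<nu>bs: "\<nu> \<in> set bs" using \<nu> by (simp add: bs_def)
  have "(\<Prod>a\<leftarrow>bs. - a) = coeff (\<Prod>a\<leftarrow>bs. [:- a, 1:]) 0"
    by (simp add: poly_0_coeff_0[symmetric] poly_prod_list o_def)
  also have "\<dots> = coeff (of_int_poly f) (length (filter (\<lambda>a. a = 0) as))"
    unfolding f prod_linear_split_zeros[of as] bs_def by (simp add: coeff_monom_mult)
  finally have int: "(\<Prod>a\<leftarrow>bs. - a) = of_int (coeff f (length (filter (\<lambda>a. a = 0) as)))"
    by simp
  moreover have "(\<Prod>a\<leftarrow>bs. - a) \<noteq> 0" by (auto simp: bs_def prod_list_zero_iff)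
  ultimately have "1 \<le> cmod (\<Prod>a\<leftarrow>bs. - a)"
    unfolding int by (simp add: norm_of_int del: of_int_prod)
  also have "\<dots> = (\<Prod>a\<leftarrow>bs. cmod a)" by (simp add: norm_prod_list)
  also have "\<dots> = cmod \<nu> * (\<Prod>a\<leftarrow>remove1 \<nu> bs. cmod a)"
    by (rule prod_list_map_remove1[OF \<nu>bs])
  also have "\<dots> \<le> cmod \<nu> * R ^ (length as - 1)"
  proof (rule mult_left_mono)
    have "(\<Prod>a\<leftarrow>remove1 \<nu> bs. cmod a) \<le> R ^ length (remove1 \<nu> bs)"
      using R(2) by (intro prod_list_le_power)
        (auto simp: bs_def dest: set_remove1_subset[THEN subsetD])
    also have "\<dots> \<le> R ^ (length as - 1)"
      using R(1) \<nu>bs length_filter_le[of "\<lambda>a. a \<noteq> 0" as]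
      by (auto simp: length_remove1 bs_def intro!: power_increasing diff_le_mono)
    finally show "(\<Prod>a\<leftarrow>remove1 \<nu> bs. cmod a) \<le> R ^ (length as - 1)" .
  qed simp
  finally show ?thesis .
qed

definition poly_mat :: "'a :: comm_ring_1 poly \<Rightarrow> 'a mat \<Rightarrow> 'a mat" where
  "poly_mat p A = mat (dim_row A) (dim_col A)
     (\<lambda>(i, j). \<Sum>k\<le>degree p. coeff p k * (A ^\<^sub>m k) $$ (i, j))"

lemma poly_mat_carrier [simp]: "A \<in> carrier_mat n n \<Longrightarrow> poly_mat p A \<in> carrier_mat n n"
  unfolding poly_mat_def carrier_mat_def by simp

lemma of_int_poly_mat:
  assumes A: "A \<in> carrier_mat n n"
  shows "map_mat of_int (poly_mat p A)
    = (poly_mat (of_int_poly p) (map_mat of_int A) :: 'a :: {comm_ring_1, ring_char_0} mat)"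
proof (rule eq_matI)
  fix i j assume "i < dim_row (poly_mat (of_int_poly p) (map_mat of_int A) :: 'a mat)"
    "j < dim_col (poly_mat (of_int_poly p) (map_mat of_int A) :: 'a mat)"
  hence ij: "i < n" "j < n" using A by (auto simp: poly_mat_def)
  have pow: "(map_mat of_int A ^\<^sub>m k) $$ (i, j) = (of_int ((A ^\<^sub>m k) $$ (i, j)) :: 'a)" for k
    using ij A by (simp flip: of_int_hom.mat_hom_pow)
  have deg: "degree (of_int_poly p :: 'a poly) = degree p"
    by (rule degree_map_poly) simp
  show "map_mat of_int (poly_mat p A) $$ (i, j)
    = (poly_mat (of_int_poly p) (map_mat of_int A) :: 'a mat) $$ (i, j)"
    using ij A by (simp add: poly_mat_def deg pow)
qed (simp_all add: poly_mat_def)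

lemma poly_mat_eigenvector:
  assumes A: "A \<in> carrier_mat n n" and ev: "eigenvector A v l"
  shows "poly_mat p A *\<^sub>v v = poly p l \<cdot>\<^sub>v v"
proof -
  have v: "v \<in> carrier_vec n" using ev A by (simp add: eigenvector_def)
  show ?thesis
  proof (rule eq_vecI)
    fix i assume "i < dim_vec (poly p l \<cdot>\<^sub>v v)"
    hence i: "i < n" using v by simp
    have "(poly_mat p A *\<^sub>v v) $ i = (\<Sum>j<n. (\<Sum>k\<le>degree p. coeff p k * (A ^\<^sub>m k) $$ (i, j)) * v $ j)"
      using A v i by (simp add: poly_mat_def scalar_prod_def atLeast0LessThan)
    also have "\<dots> = (\<Sum>k\<le>degree p. \<Sum>j<n. coeff p k * (A ^\<^sub>m k) $$ (i, j) * v $ j)"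
      unfolding sum_distrib_right by (rule sum.swap)
    also have "\<dots> = (\<Sum>k\<le>degree p. coeff p k * (A ^\<^sub>m k *\<^sub>v v) $ i)"
      using A v i by (simp add: scalar_prod_def atLeast0LessThan sum_distrib_left mult.assoc)
    also have "\<dots> = (\<Sum>k\<le>degree p. coeff p k * l ^ k) * v $ i"
      using eigenvector_pow[OF A ev] v i by (simp add: sum_distrib_right mult.assoc)
    also have "\<dots> = (poly p l \<cdot>\<^sub>v v) $ i"
      using v i by (simp add: poly_altdef)
    finally show "(poly_mat p A *\<^sub>v v) $ i = (poly p l \<cdot>\<^sub>v v) $ i" .
  qed (use A v carrier_matD[OF poly_mat_carrier[OF A]] in simp)
qed

lemma norm_poly_mat_le:
  fixes A :: "'a :: real_normed_field mat"
  assumes A: "A \<in> carrier_mat n n" and "0 \<le> h"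
    and h: "\<And>i j. i < n \<Longrightarrow> j < n \<Longrightarrow> norm (A $$ (i, j)) \<le> h"
    and ij: "i < n" "j < n"
  shows "norm (poly_mat p A $$ (i, j)) \<le> (\<Sum>k\<le>degree p. norm (coeff p k) * (real n * h) ^ k)"
  using A ij
  by (auto simp: poly_mat_def norm_mult intro!: order_trans[OF norm_sum] sum_mono mult_left_mono
      norm_mat_pow_le[OF A \<open>0 \<le> h\<close> h])

lemma norm_poly_mat_pderiv_char_poly_le:
  fixes C :: "complex mat"
  assumes C: "C \<in> carrier_mat n n" and "1 \<le> h"
    and h: "\<And>i j. i < n \<Longrightarrow> j < n \<Longrightarrow> cmod (C $$ (i, j)) \<le> h"
    and ij: "i < n" "j < n"
  shows "cmod (poly_mat (pderiv (char_poly C)) C $$ (i, j)) \<le> ((real n + 1) * h) ^ (2 * n + 1)"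
proof -
  define Q where "Q = (real n + 1) * h"
  define p where "p = char_poly C"
  have "real n \<le> real n * h" using \<open>1 \<le> h\<close> by (simp add: mult_le_cancel_left1)
  hence Q: "1 \<le> Q" "real n \<le> Q" "real n * h \<le> Q" "1 + real n * h \<le> Q"
    using \<open>1 \<le> h\<close> by (auto simp: Q_def algebra_simps)
  have deg: "degree (pderiv p) \<le> n - 1"
    using degree_monic_char_poly[OF C] by (simp add: p_def degree_pderiv)
  have "cmod (coeff (pderiv p) k) * (real n * h) ^ k \<le> Q ^ (n + 1) * Q ^ (n - 1)"
    if k: "k \<le> degree (pderiv p)" for k
  proof (rule mult_mono)
    have "cmod (coeff (pderiv p) k) = real (Suc k) * cmod (coeff p (Suc k))"
      by (simp add: coeff_pderiv norm_mult del: of_nat_Suc)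
    also have "\<dots> \<le> Q * Q ^ n"
    proof (rule mult_mono)
      show "real (Suc k) \<le> Q" using k deg ij Q(2) by linarith
      have "0 \<le> 1 + real n * h" using \<open>1 \<le> h\<close> by simp
      thus "cmod (coeff p (Suc k)) \<le> Q ^ n"
        using norm_coeff_char_poly_le[OF C h, of "Suc k"] power_mono[OF Q(4), of n]
        by (simp add: p_def)
    qed (use Q in auto)
    finally show "cmod (coeff (pderiv p) k) \<le> Q ^ (n + 1)" by simp
    show "(real n * h) ^ k \<le> Q ^ (n - 1)"
      using k deg ij Q(3) \<open>1 \<le> h\<close> mult_mono[of 1 "real n" 1 h]
      by (intro order_trans[OF power_increasing power_mono]) auto
  qed (use Q \<open>1 \<le> h\<close> in auto)
  hence "cmod (poly_mat (pderiv p) C $$ (i, j)) \<le> (\<Sum>k\<le>degree (pderiv p). Q ^ (n + 1) * Q ^ (n - 1))"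
    using \<open>1 \<le> h\<close> by (intro order_trans[OF norm_poly_mat_le[OF C _ h ij]] sum_mono) auto
  also have "\<dots> \<le> Q * (Q ^ (n + 1) * Q ^ (n - 1))"
    using deg ij Q(1,2) by (auto intro!: mult_right_mono)
  also have "\<dots> = Q ^ (1 + (n + 1) + (n - 1))" by (simp add: power_add)
  also have "1 + (n + 1) + (n - 1) = 2 * n + 1" using ij by simp
  finally show ?thesis by (simp add: Q_def p_def)
qed

lemma poly_pderiv_nonzero_if_order_1:
  fixes p :: "'a :: field_char_0 poly"
  assumes "p \<noteq> 0" and "Polynomial.order a p = 1"
  shows "poly (pderiv p) a \<noteq> 0"
proof
  assume "poly (pderiv p) a = 0"
  have "poly p a = 0" using assms by (simp add: order_root)
  hence "Polynomial.order a (pderiv p) = 0" using order_pderiv[OF \<open>p \<noteq> 0\<close>] assms(2) by simp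
  with \<open>poly (pderiv p) a = 0\<close> have "pderiv p = 0" using order_root by blast
  hence "degree p = 0" by (simp add: pderiv_eq_0_iff)
  with \<open>poly p a = 0\<close> \<open>p \<noteq> 0\<close> show False by (metis degree_0_id poly_const_conv pCons_0_0)
qed

lemma norm_pderiv_char_poly_int_mat_ge:
  fixes A :: "int mat"
  assumes A: "A \<in> carrier_mat n n" and "1 \<le> H"
    and H: "\<And>i j. i < n \<Longrightarrow> j < n \<Longrightarrow> \<bar>real_of_int (A $$ (i, j))\<bar> \<le> H"
    and ev: "eigenvector (map_mat of_int A) x l"
    and nonzero: "poly (pderiv (char_poly (map_mat of_int A))) l \<noteq> 0"
  shows "1 \<le> cmod (poly (pderiv (char_poly (map_mat of_int A))) l)
    * (((real n + 1) * H) ^ (2 * n + 2)) ^ (n - 1)"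
proof -
  define C where "C = (map_mat of_int A :: complex mat)"
  define N where "N = poly_mat (pderiv (char_poly A)) A"
  define Q where "Q = (real n + 1) * H"
  have C: "C \<in> carrier_mat n n" and N: "N \<in> carrier_mat n n" using A by (auto simp: C_def N_def)
  have NC: "map_mat of_int N = poly_mat (pderiv (char_poly C)) C"
    unfolding N_def C_def of_int_poly_mat[OF A]
    by (simp add: of_int_hom.char_poly_hom[OF A] of_int_hom.map_poly_pderiv)
  have "cmod (C $$ (i, j)) \<le> H" if "i < n" "j < n" for i j
    using H[OF that] that A by (simp add: C_def)
  hence N_entries: "cmod (map_mat of_int N $$ (i, j)) \<le> Q ^ (2 * n + 1)"
    if "i < n" "j < n" for i j
    unfolding NC Q_def using norm_poly_mat_pderiv_char_poly_le[OF C \<open>1 \<le> H\<close> _ that] by blast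
  have NC_carrier: "(map_mat of_int N :: complex mat) \<in> carrier_mat n n" using N by simp
  obtain as where f: "char_poly (map_mat of_int N :: complex mat) = (\<Prod>a\<leftarrow>as. [:- a, 1:])"
    and len: "length as = n"
    using char_poly_factorized[OF NC_carrier] by blast
  note roots = eigenvalue_iff_mem_char_poly_factorization[OF NC_carrier f]
  have "real n \<le> real n * H" using \<open>1 \<le> H\<close> by (simp add: mult_le_cancel_left1)
  hence Q: "1 \<le> Q" "real n \<le> Q"
    using \<open>1 \<le> H\<close> by (auto simp: Q_def algebra_simps)
  have roots_bound: "cmod a \<le> Q ^ (2 * n + 2)" if "a \<in> set as" for a
  proof -
    have "eigenvalue (map_mat of_int N) a" using roots that by simp
    then obtain v where "eigenvector (map_mat of_int N) v a" by (auto simp: eigenvalue_def)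
    hence "cmod a \<le> real n * Q ^ (2 * n + 1)"
      using norm_eigenvalue_le[OF NC_carrier N_entries] by blast
    also have "\<dots> \<le> Q * Q ^ (2 * n + 1)" using Q by (intro mult_right_mono) auto
    finally show ?thesis by simp
  qed
  have mem: "poly (pderiv (char_poly C)) l \<in> set as"
  proof -
    have evC: "eigenvector C x l" using ev by (simp add: C_def)
    hence "eigenvector (map_mat of_int N) x (poly (pderiv (char_poly C)) l)"
      unfolding NC eigenvector_def poly_mat_eigenvector[OF C evC]
      using carrier_matD[OF poly_mat_carrier[OF C]] carrier_matD[OF C] by simp
    hence "eigenvalue (map_mat of_int N) (poly (pderiv (char_poly C)) l)"
      unfolding eigenvalue_def by blast
    thus ?thesis using roots by simp
  qed
  have "of_int_poly (char_poly N) = (\<Prod>a\<leftarrow>as. [:- a, 1:])"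
    using f by (simp add: of_int_hom.char_poly_hom[OF N])
  from norm_nonzero_root_int_poly_ge[OF this one_le_power[OF Q(1)] roots_bound mem] nonzero
  show ?thesis by (simp add: len C_def Q_def)
qed

section \<open>The height bound\<close>

lemma abs_le_height:
  assumes A: "A \<in> carrier_mat n n" and ij: "i < n" "j < n"
  shows "\<bar>A $$ (i, j)\<bar> \<le> height A"
proof -
  have "{\<bar>A $$ (i, j)\<bar> | i j. i < dim_row A \<and> j < dim_col A}
      = (\<lambda>(i, j). \<bar>A $$ (i, j)\<bar>) ` ({..<n} \<times> {..<n})"
    using A by auto
  thus ?thesis unfolding height_def using ij A by (auto intro!: Max_ge)
qed

lemma height_ge_1:
  assumes A: "A \<in> carrier_mat n n" and n: "2 \<le> n"
    and simple: "simple_eigenvalue (map_mat of_int A) l"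
  shows "1 \<le> height A"
proof (rule ccontr)
  assume "\<not> 1 \<le> height A"
  hence "A = 0\<^sub>m n n" using abs_le_height[OF A] A by (intro eq_matI) force+
  hence "map_mat of_int A = (0\<^sub>m n n :: complex mat)" by auto
  moreover have "diag_mat (0\<^sub>m n n :: complex mat) = replicate n 0"
    by (rule nth_equalityI) (auto simp: diag_mat_def)
  hence "char_poly (0\<^sub>m n n :: complex mat) = [:0, 1:] ^ n"
    by (subst char_poly_upper_triangular[of _ n]) (auto simp: upper_triangular_def)
  ultimately have "Polynomial.order l ([:0, 1:] ^ n) = 1"
    using simple by (simp add: simple_eigenvalue_def)
  with n show False by (simp add: order_linear_power split: if_splits)
qed

lemma fact_mult_power_le:
  fixes L H :: real
  assumes H: "1 \<le> H" and L: "0 \<le> L" "L \<le> real n * H"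
  shows "real n * (fact (n - 1) * (L + H) ^ (n - 1)) \<le> ((real n + 1) * H) ^ (2 * n - 1)"
proof (cases "n = 0")
  case False
  define Q where "Q = (real n + 1) * H"
  have "real n \<le> real n * H" using H by (simp add: mult_le_cancel_left1)
  hence Q: "real n \<le> Q" "L + H \<le> Q" using H L by (auto simp: Q_def algebra_simps)
  have "(fact (n - 1) :: real) \<le> real (n - 1) ^ (n - 1)"
    using fact_le_power[of "n - 1"] by (simp flip: of_nat_power)
  also have "\<dots> \<le> Q ^ (n - 1)" using Q(1) by (intro power_mono) auto
  finally have "real n * (fact (n - 1) * (L + H) ^ (n - 1)) \<le> Q * (Q ^ (n - 1) * Q ^ (n - 1))"
    using Q H L by (intro mult_mono power_mono) auto
  also have "\<dots> = Q ^ (1 + (n - 1) + (n - 1))" by (simp add: power_add)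
  also have "1 + (n - 1) + (n - 1) = 2 * n - 1" using False by simp
  finally show ?thesis by (simp add: Q_def)
qed simp

lemma power_le_kappa_NSE_bound:
  fixes H :: real
  assumes n: "2 \<le> n" and H: "1 \<le> H"
  shows "((real n + 1) * H) ^ (2 * n - 1) * (((real n + 1) * H) ^ (2 * n + 2)) ^ (n - 1)
    \<le> real n ^ (3 * n) * 2 ^ (2 * n) * (2 * sqrt (real n) * H) ^ (2 * n ^ 3 - 2 * n)"
proof -
  define Q where "Q = (real n + 1) * H"
  define P where "P = 4 * real n * H\<^sup>2"
  have "1 \<le> real n + 1" by simp
  hence Q: "1 \<le> Q" using H mult_mono[of 1 "real n + 1" 1 H] by (simp add: Q_def)
  obtain m where m: "n = m + 2" using n by (metis add.commute le_add_diff_inverse)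
  have exponent: "(2 * n - 1) + (2 * n + 2) * (n - 1) = 2 * n\<^sup>2 + 2 * n - 3"
    unfolding m by (simp add: power2_eq_square algebra_simps)
  have "Q ^ (2 * n - 1) * (Q ^ (2 * n + 2)) ^ (n - 1) = Q ^ ((2 * n - 1) + (2 * n + 2) * (n - 1))"
    by (simp only: power_add power_mult)
  also have "\<dots> = Q ^ (2 * n\<^sup>2 + 2 * n - 3)" unfolding exponent ..
  also have "\<dots> \<le> P ^ (n ^ 3 - n)"
  proof (cases "n = 2")
    case True
    \<comment> \<open>here \<open>9 > n ^ 3 - n = 6\<close>, but \<open>3 ^ 9 \<le> 8 ^ 6\<close> and \<open>H ^ 9 \<le> H ^ 12\<close>\<close>
    have "Q ^ (2 * n\<^sup>2 + 2 * n - 3) = 19683 * H ^ 9"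
      unfolding Q_def True by (simp add: power_mult_distrib)
    also have "\<dots> \<le> 262144 * H ^ 12" using H by (intro mult_mono power_increasing) auto
    also have "\<dots> = P ^ (n ^ 3 - n)"
      unfolding P_def True by (simp add: power_mult_distrib flip: power_mult)
    finally show ?thesis .
  next
    case False
    hence "3 \<le> n" using n by simp
    have "3 * n\<^sup>2 \<le> n ^ 3" "3 * n \<le> n\<^sup>2"
      using mult_le_mono1[OF \<open>3 \<le> n\<close>, of "n\<^sup>2"] mult_le_mono1[OF \<open>3 \<le> n\<close>, of n]
      by (simp_all add: power2_eq_square power3_eq_cube)
    hence "2 * n\<^sup>2 + 2 * n - 3 \<le> n ^ 3 - n" by linarith
    hence "Q ^ (2 * n\<^sup>2 + 2 * n - 3) \<le> Q ^ (n ^ 3 - n)" using Q by (rule power_increasing)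
    also have "Q \<le> P"
    proof -
      have "Q \<le> 4 * real n * H" using n H by (simp add: Q_def algebra_simps)
      also have "\<dots> \<le> P" using n H by (simp add: P_def power2_eq_square)
      finally show ?thesis .
    qed
    hence "Q ^ (n ^ 3 - n) \<le> P ^ (n ^ 3 - n)" using Q by (intro power_mono) auto
    finally show ?thesis .
  qed
  also have "\<dots> = (2 * sqrt (real n) * H) ^ (2 * n ^ 3 - 2 * n)"
    by (simp add: P_def power_mult power_mult_distrib flip: diff_mult_distrib2)
  also have "\<dots> \<le> real n ^ (3 * n) * 2 ^ (2 * n) * (2 * sqrt (real n) * H) ^ (2 * n ^ 3 - 2 * n)"
  proof -
    have "1 * 1 \<le> real n ^ (3 * n) * (2 :: real) ^ (2 * n)"
      using n by (intro mult_mono one_le_power) auto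
    thus ?thesis using H by (simp add: mult_le_cancel_right1)
  qed
  finally show ?thesis by (simp add: Q_def)
qed

lemma kappa_NSE_le_power:
  fixes A :: "int mat"
  assumes A: "A \<in> carrier_mat n n" and "1 \<le> H"
    and A_entries: "\<And>i j. i < n \<Longrightarrow> j < n \<Longrightarrow> \<bar>real_of_int (A $$ (i, j))\<bar> \<le> H"
    and simple: "simple_eigenvalue (map_mat of_int A) l"
    and x: "x \<in> carrier_vec n" "vnorm x = 1" "map_mat of_int A *\<^sub>v x = l \<cdot>\<^sub>v x"
    and y: "y \<in> carrier_vec n" "vnorm y = 1"
      "transpose_mat (map_mat of_int A) *\<^sub>v conjugate y = l \<cdot>\<^sub>v conjugate y"
  shows "kappa_NSE x y
    \<le> ((real n + 1) * H) ^ (2 * n - 1) * (((real n + 1) * H) ^ (2 * n + 2)) ^ (n - 1)"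
proof -
  define C where "C = (map_mat of_int A :: complex mat)"
  define Q where "Q = (real n + 1) * H"
  define \<nu> where "\<nu> = poly (pderiv (char_poly C)) l"
  have C: "C \<in> carrier_mat n n" using A by (simp add: C_def)
  have C_entries: "cmod (C $$ (i, j)) \<le> H" if "i < n" "j < n" for i j
    using A_entries[OF that] that A by (simp add: C_def)
  have simple_C: "Polynomial.order l (char_poly C) = 1"
    using simple by (simp add: simple_eigenvalue_def C_def)
  obtain i0 where "i0 < n" "1 \<le> real n * (cmod (x $ i0))\<^sup>2"
    using vnorm_eq_1_large_component[OF x(1,2)] .
  hence ev: "eigenvector C x l"
    using x C by (auto simp: eigenvector_def C_def)
  have "char_poly C \<noteq> 0"
    using degree_monic_char_poly[OF C] by (metis coeff_0 zero_neq_one)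
  hence "\<nu> \<noteq> 0" unfolding \<nu>_def by (rule poly_pderiv_nonzero_if_order_1[OF _ simple_C])
  have "kappa_NSE x y * cmod \<nu> \<le> real n * (fact (n - 1) * (cmod l + H) ^ (n - 1))"
    unfolding \<nu>_def using x y
    by (intro kappa_NSE_mult_pderiv_le[OF C simple_C] norm_adj_char_matrix_le[OF C C_entries])
      (simp_all add: C_def)
  also have "\<dots> \<le> Q ^ (2 * n - 1)"
    unfolding Q_def using \<open>1 \<le> H\<close> norm_eigenvalue_le[OF C C_entries ev]
    by (intro fact_mult_power_le) auto
  finally have upper: "kappa_NSE x y * cmod \<nu> \<le> Q ^ (2 * n - 1)" .
  have lower: "1 \<le> cmod \<nu> * (Q ^ (2 * n + 2)) ^ (n - 1)"
    using norm_pderiv_char_poly_int_mat_ge[OF A \<open>1 \<le> H\<close> A_entries] ev \<open>\<nu> \<noteq> 0\<close>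
    by (simp add: \<nu>_def C_def Q_def)
  have "kappa_NSE x y \<le> kappa_NSE x y * (cmod \<nu> * (Q ^ (2 * n + 2)) ^ (n - 1))"
    using mult_left_mono[OF lower, of "kappa_NSE x y"] by (simp add: kappa_NSE_def)
  also have "\<dots> \<le> Q ^ (2 * n - 1) * (Q ^ (2 * n + 2)) ^ (n - 1)"
    using upper \<open>1 \<le> H\<close> by (simp add: Q_def mult.assoc[symmetric] mult_right_mono)
  finally show ?thesis by (simp add: Q_def)
qed

theorem theorem3:
  fixes A :: "int mat" and n :: nat and l :: complex and x y :: "complex vec"
  assumes "A \<in> carrier_mat n n"
    and "simple_eigenvalue (map_mat of_int A) l"
    and "x \<in> carrier_vec n" and "y \<in> carrier_vec n"
    and "vnorm x = 1" and "vnorm y = 1"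
    and "map_mat of_int A *\<^sub>v x = l \<cdot>\<^sub>v x"
    and "transpose_mat (map_mat of_int A) *\<^sub>v conjugate y = l \<cdot>\<^sub>v conjugate y"
  shows "kappa_NSE x y \<le> real n ^ (3 * n) * 2 ^ (2 * n)
           * (2 * sqrt (real n) * real_of_int (height A)) ^ (2 * n ^ 3 - 2 * n)"
proof -
  define H where "H = real_of_int (height A)"
  have entries: "\<bar>real_of_int (A $$ (i, j))\<bar> \<le> H" if "i < n" "j < n" for i j
    using abs_le_height[OF assms(1) that] by (simp add: H_def)
  obtain i0 where "i0 < n" using vnorm_eq_1_large_component[OF assms(3,5)] .
  then consider "n = 1" | "2 \<le> n" by linarith
  thus ?thesis
  proof cases
    case 1
    thus ?thesis using kappa_NSE_dim_1 assms(3-6) by simp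
  next
    case 2
    have "1 \<le> H" using height_ge_1[OF assms(1) 2 assms(2)] by (simp add: H_def)
    have "kappa_NSE x y
        \<le> ((real n + 1) * H) ^ (2 * n - 1) * (((real n + 1) * H) ^ (2 * n + 2)) ^ (n - 1)"
      by (rule kappa_NSE_le_power[OF assms(1) \<open>1 \<le> H\<close> entries assms(2,3,5,7,4,6,8)])
    also have "\<dots> \<le> real n ^ (3 * n) * 2 ^ (2 * n) * (2 * sqrt (real n) * H) ^ (2 * n ^ 3 - 2 * n)"
      by (rule power_le_kappa_NSE_bound[OF 2 \<open>1 \<le> H\<close>])
    finally show ?thesis by (simp add: H_def)
  qed
qed

end
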